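(* The function $\mathrm{Eci}(x,\lambda)=\int_0^x \frac{e^{it\lambda}}{\cos t}\,dt$ satisfies \[ \mathrm{Eci}(x,\lambda)=e^{ix\lambda}\,\mathrm{L}\left(x-\frac{\pi}{2},\lambda\right)+i\,\mathrm{S}_{\pi/2}(\lambda), \] and admits the Laplace transform representation \[ \mathrm{Eci}(y,\lambda)=i\int_0^\infty e^{-\lambda u}\left(\frac{1}{\cosh u}-\frac{e^{i\lambda y}}{\cosh(u-iy)}\right)du. \]
   Context: Here $0<x,y<\pi/2$ and $\lambda$ is a real parameter (with $\lambda>-1$ for the Laplace integrals). $L(x,\mu)=\sum_{k=1}^\infty \frac{e^{ikx}}{k+\mu}$ and $\mathrm{L}(x,\lambda)=e^{-ix}L\left(2x,\frac{\lambda-1}{2}\right)=2\sum_{k=1}^\infty\frac{e^{(2k-1)ix}}{2k-1+\lambda}$, which has the representation $\mathrm{L}(x,\lambda)=\int_0^\infty\frac{e^{-\lambda u}du}{\sinh(u-ix)}$. The special value $\mathrm{S}_{\pi/2}(\lambda)=2\sum_{k=1}^\infty \frac{(-1)^{k-1}}{2k-1+\lambda}=\int_0^\infty\frac{e^{-\lambda u}}{\cosh u}du$. *)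

theory Defs
  imports "HOL-Analysis.Analysis"
begin

definition Eci :: "real \<Rightarrow> real \<Rightarrow> complex" where
  "Eci x lam = integral {0..x} (\<lambda>t. exp (\<i> * complex_of_real (t * lam)) / complex_of_real (cos t))"

text \<open>L(x,lambda) = 2 sum_{k>=1} e^{(2k-1) i x} / (2k-1+lambda), index shifted to k>=0\<close>
definition Lser :: "real \<Rightarrow> real \<Rightarrow> complex" where
  "Lser x lam = 2 * (\<Sum>k. exp (\<i> * complex_of_real ((2 * real k + 1) * x)) / complex_of_real (2 * real k + 1 + lam))"

text \<open>S_{pi/2}(lambda) = 2 sum_{k>=1} (-1)^{k-1} / (2k-1+lambda), index shifted to k>=0\<close>
definition Spi2 :: "real \<Rightarrow> complex" where
  "Spi2 lam = complex_of_real (2 * (\<Sum>k. (-1) ^ k / (2 * real k + 1 + lam)))"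

end

theory Submission
  imports Defs "HOL-Real_Asymp.Real_Asymp" "HOL-Complex_Analysis.Complex_Analysis"
begin

(* With q(t) = -e^(2it), the partial sums P_N of e^(ix lambda) L(x - pi/2, lambda) satisfy
   P_N'(t) = e^(it lambda)/cos t * (1 - q(t)^N), by summing a geometric series and using
   2 e^(it) cos t = 1 - q(t).  Integrating over [0, x],
     Eci(x) = P_N(x) - P_N(0) + int_0^x e^(it lambda)/cos t * q(t)^N dt,
   where the last integral oscillates with frequency 2N and so is O(1/N) by integration by parts,
   while P_N(0) tends to -i S_pi/2(lambda).

   For the Laplace form, h(w) = e^(-lambda w)/cosh w is holomorphic on the strip |Im w| < pi/2 and
   h(-it) = e^(it lambda)/cos t, so Eci(y) is the integral of h along [0, -iy].  Integrating a
   primitive of h around the rectangle 0, R, R - iy, -iy, the side Re w = R is O(e^(-(lambda+1) R));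
   the limit R -> infinity is taken by dominated convergence, using
   |h(w)| <= 2 e^(-(lambda+1) Re w) / cos (Im w). *)

section \<open>A Riemann--Lebesgue lemma for continuously differentiable functions\<close>

lemma integral_mult_exp_by_parts:
  fixes f f' :: "real \<Rightarrow> complex"
  assumes "a \<le> b" "\<omega> \<noteq> 0"
    and deriv: "\<And>t. t \<in> {a..b} \<Longrightarrow> (f has_vector_derivative f' t) (at t within {a..b})"
    and cont: "continuous_on {a..b} f'"
  shows "integral {a..b} (\<lambda>t. f t * exp (\<i> * of_real (\<omega> * t)))
           = (f b * exp (\<i> * of_real (\<omega> * b)) - f a * exp (\<i> * of_real (\<omega> * a))
              - integral {a..b} (\<lambda>t. f' t * exp (\<i> * of_real (\<omega> * t)))) / (\<i> * of_real \<omega>)"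
proof -
  define e where "e z = exp (\<i> * of_real \<omega> * z) / (\<i> * of_real \<omega>)" for z
  have "((\<lambda>t. f t * e (of_real t)) has_vector_derivative
      f t * exp (\<i> * of_real (\<omega> * t)) + f' t * e (of_real t)) (at t within {a..b})"
    if "t \<in> {a..b}" for t
  proof -
    have "(e has_field_derivative exp (\<i> * of_real (\<omega> * t))) (at (of_real t))"
      unfolding e_def using \<open>\<omega> \<noteq> 0\<close> by (auto intro!: derivative_eq_intros simp: field_simps)
    then show ?thesis
      using deriv[OF that] by (auto intro!: derivative_eq_intros has_vector_derivative_real_field)
  qed
  then have ftc: "((\<lambda>t. f t * exp (\<i> * of_real (\<omega> * t)) + f' t * e (of_real t)) has_integral
      f b * e (of_real b) - f a * e (of_real a)) {a..b}"
    using \<open>a \<le> b\<close> by (intro fundamental_theorem_of_calculus) auto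
  have parts: "((\<lambda>t. f' t * e (of_real t)) has_integral
      integral {a..b} (\<lambda>t. f' t * exp (\<i> * of_real (\<omega> * t))) / (\<i> * of_real \<omega>)) {a..b}"
  proof -
    have "(\<lambda>t. f' t * exp (\<i> * of_real (\<omega> * t))) integrable_on {a..b}"
      by (intro integrable_continuous_interval continuous_intros cont)
    then show ?thesis
      unfolding e_def by (simp add: has_integral_divide integrable_integral mult.assoc times_divide_eq_right)
  qed
  have "((\<lambda>t. f t * exp (\<i> * of_real (\<omega> * t))) has_integral
      f b * e (of_real b) - f a * e (of_real a)
      - integral {a..b} (\<lambda>t. f' t * exp (\<i> * of_real (\<omega> * t))) / (\<i> * of_real \<omega>)) {a..b}"
    using has_integral_diff[OF ftc parts] by simp
  then show ?thesis
    unfolding e_def by (simp add: integral_unique diff_divide_distrib mult.assoc)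
qed

lemma norm_integral_mult_exp_le:
  fixes f f' :: "real \<Rightarrow> complex"
  assumes "a \<le> b" "\<omega> > 0"
    and deriv: "\<And>t. t \<in> {a..b} \<Longrightarrow> (f has_vector_derivative f' t) (at t within {a..b})"
    and cont: "continuous_on {a..b} f'"
    and M: "\<And>t. t \<in> {a..b} \<Longrightarrow> norm (f' t) \<le> M"
  shows "norm (integral {a..b} (\<lambda>t. f t * exp (\<i> * of_real (\<omega> * t))))
           \<le> (norm (f a) + norm (f b) + M * (b - a)) / \<omega>"
proof -
  have integrable: "(\<lambda>t. f' t * exp (\<i> * of_real (\<omega> * t))) integrable_on {a..b}"
    by (intro integrable_continuous_interval continuous_intros cont)
  have "0 \<le> M"
    using M[of a] \<open>a \<le> b\<close> by (meson atLeastAtMost_iff norm_ge_zero order.refl order.trans)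
  have bound: "norm (f' t * exp (\<i> * of_real (\<omega> * t))) \<le> M" if "t \<in> {a..b} - {}" for t
    using M that by (simp add: norm_mult)
  from has_integral_bound_real[OF \<open>0 \<le> M\<close> finite.emptyI integrable_integral[OF integrable] bound]
  have "norm (integral {a..b} (\<lambda>t. f' t * exp (\<i> * of_real (\<omega> * t)))) \<le> M * (b - a)"
    using \<open>a \<le> b\<close> by simp
  moreover have "norm (f b * exp (\<i> * of_real (\<omega> * b)) - f a * exp (\<i> * of_real (\<omega> * a)))
      \<le> norm (f a) + norm (f b)"
    using norm_triangle_ineq4[of "f b * exp (\<i> * of_real (\<omega> * b))" "f a * exp (\<i> * of_real (\<omega> * a))"]
    by (simp add: norm_mult)
  ultimately have "norm (f b * exp (\<i> * of_real (\<omega> * b)) - f a * exp (\<i> * of_real (\<omega> * a))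
      - integral {a..b} (\<lambda>t. f' t * exp (\<i> * of_real (\<omega> * t)))) \<le> norm (f a) + norm (f b) + M * (b - a)"
    by (meson add_mono norm_triangle_ineq4 order_trans)
  moreover have "norm (integral {a..b} (\<lambda>t. f t * exp (\<i> * of_real (\<omega> * t))))
      = norm (f b * exp (\<i> * of_real (\<omega> * b)) - f a * exp (\<i> * of_real (\<omega> * a))
          - integral {a..b} (\<lambda>t. f' t * exp (\<i> * of_real (\<omega> * t)))) / \<omega>"
    using \<open>\<omega> > 0\<close> integral_mult_exp_by_parts[OF \<open>a \<le> b\<close> _ deriv cont, of \<omega>]
    by (simp add: norm_divide norm_mult)
  ultimately show ?thesis
    using \<open>\<omega> > 0\<close> by (simp add: divide_right_mono)
qed

lemma Riemann_Lebesgue_C1: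
  fixes f f' :: "real \<Rightarrow> complex"
  assumes "a \<le> b"
    and "\<And>t. t \<in> {a..b} \<Longrightarrow> (f has_vector_derivative f' t) (at t within {a..b})"
    and cont: "continuous_on {a..b} f'"
  shows "((\<lambda>\<omega>. integral {a..b} (\<lambda>t. f t * exp (\<i> * of_real (\<omega> * t)))) \<longlongrightarrow> 0) at_top"
proof -
  obtain M where M: "\<And>t. t \<in> {a..b} \<Longrightarrow> norm (f' t) \<le> M"
    using continuous_on_compact_bound[OF compact_Icc cont] by blast
  show ?thesis
  proof (rule Lim_null_comparison)
    show "\<forall>\<^sub>F \<omega> in at_top. norm (integral {a..b} (\<lambda>t. f t * exp (\<i> * of_real (\<omega> * t))))
        \<le> (norm (f a) + norm (f b) + M * (b - a)) / \<omega>"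
      using eventually_gt_at_top[of 0]
      by eventually_elim (rule norm_integral_mult_exp_le, use assms M in auto)
    show "((\<lambda>\<omega>. (norm (f a) + norm (f b) + M * (b - a)) / \<omega>) \<longlongrightarrow> 0) at_top"
      by real_asymp
  qed
qed

section \<open>The series representation\<close>

definition eci_kernel :: "real \<Rightarrow> complex \<Rightarrow> complex" where
  "eci_kernel lam w = exp (\<i> * of_real lam * w) / cos w"

definition eci_ratio :: "complex \<Rightarrow> complex" where
  "eci_ratio w = - exp (2 * \<i> * w)"

(* e^(i lam w) times the N-th partial sum of L(w - pi/2, lam), with the two exponentials merged
   so that each term differentiates to i times its numerator. *)
definition eci_partial_sum :: "real \<Rightarrow> nat \<Rightarrow> complex \<Rightarrow> complex" where
  "eci_partial_sum lam N w = 2 * (\<Sum>k<N.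
     exp (\<i> * (of_real lam * w + of_real (2 * real k + 1) * (w - of_real pi / 2))) / of_real (2 * real k + 1 + lam))"

lemma Eci_eq_integral_eci_kernel: "Eci x lam = integral {0..x} (\<lambda>t. eci_kernel lam (of_real t))"
  unfolding Eci_def eci_kernel_def by (simp add: cos_of_real mult_ac)

lemma cos_of_real_nonzero: "0 \<le> t \<Longrightarrow> t < pi / 2 \<Longrightarrow> cos (complex_of_real t) \<noteq> 0"
  using cos_gt_zero_pi[of t] by (simp add: cos_of_real)

lemma has_field_derivative_eci_kernel:
  "cos w \<noteq> 0 \<Longrightarrow> (eci_kernel lam has_field_derivative
     exp (\<i> * of_real lam * w) * (\<i> * of_real lam * cos w + sin w) / (cos w)\<^sup>2) (at w)"
  unfolding eci_kernel_def by (auto intro!: derivative_eq_intros simp: field_simps power2_eq_square)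

lemma exp_odd_multiple_shifted:
  "exp (\<i> * (of_real (2 * real k + 1) * (w - of_real pi / 2))) = - \<i> * exp (\<i> * w) * eci_ratio w ^ k"
proof -
  have "\<i> * (of_real (2 * real k + 1) * (w - of_real pi / 2)) =
        \<i> * w + (- (\<i> * of_real pi / 2)) + of_nat k * (2 * \<i> * w - \<i> * of_real pi)"
    by (simp add: algebra_simps)
  then have "exp (\<i> * (of_real (2 * real k + 1) * (w - of_real pi / 2))) =
      exp (\<i> * w) * exp (- (\<i> * of_real pi / 2)) * exp (2 * \<i> * w - \<i> * of_real pi) ^ k"
    by (simp only: exp_add exp_of_nat_mult)
  moreover have "exp (- (\<i> * of_real pi / 2)) = - \<i>"
    using cis_conv_exp[of "- (pi / 2)"] by (simp add: complex_eq_iff)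
  moreover have "exp (2 * \<i> * w - \<i> * of_real pi) = eci_ratio w"
    by (simp add: exp_diff eci_ratio_def)
  ultimately show ?thesis
    by simp
qed

lemma two_exp_mult_cos: "2 * exp (\<i> * w) * cos w = 1 - eci_ratio w"
  by (simp add: cos_exp_eq eci_ratio_def field_simps exp_minus flip: exp_add)

lemma has_field_derivative_eci_partial_sum:
  assumes "cos w \<noteq> 0" and "\<And>k. k < N \<Longrightarrow> 2 * real k + 1 + lam \<noteq> 0"
  shows "(eci_partial_sum lam N has_field_derivative eci_kernel lam w * (1 - eci_ratio w ^ N)) (at w)"
proof -
  define c where "c k = exp (\<i> * (of_real lam * w + of_real (2 * real k + 1) * (w - of_real pi / 2)))" for k
  have "((\<lambda>w. exp (\<i> * (of_real lam * w + of_real (2 * real k + 1) * (w - of_real pi / 2))) /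
      of_real (2 * real k + 1 + lam)) has_field_derivative \<i> * c k) (at w)" if "k < N" for k
  proof -
    have deriv_exp: "((\<lambda>w. exp (\<i> * (of_real lam * w + of_real (2 * real k + 1) * (w - of_real pi / 2))))
        has_field_derivative c k * (\<i> * of_real (2 * real k + 1 + lam))) (at w)"
      unfolding c_def by (auto intro!: derivative_eq_intros simp: algebra_simps)
    have "(of_real (2 * real k + 1 + lam) :: complex) \<noteq> 0"
      using assms(2)[OF that] by (metis of_real_eq_0_iff)
    with DERIV_cdivide[OF deriv_exp, of "of_real (2 * real k + 1 + lam)"] show ?thesis
      by (simp add: mult.commute)
  qed
  then have "(eci_partial_sum lam N has_field_derivative 2 * (\<Sum>k<N. \<i> * c k)) (at w)"
    unfolding eci_partial_sum_def by (intro DERIV_cmult DERIV_sum) auto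
  moreover have "c k = - \<i> * exp (\<i> * of_real lam * w) * exp (\<i> * w) * eci_ratio w ^ k" for k
    unfolding c_def distrib_left exp_add exp_odd_multiple_shifted by (simp add: mult_ac)
  then have "2 * (\<Sum>k<N. \<i> * c k) = exp (\<i> * of_real lam * w) * (2 * exp (\<i> * w)) * (\<Sum>k<N. eci_ratio w ^ k)"
    by (simp add: sum_distrib_left sum_distrib_right mult_ac)
  also have "\<dots> = eci_kernel lam w * ((1 - eci_ratio w) * (\<Sum>k<N. eci_ratio w ^ k))"
    using assms(1) by (simp add: eci_kernel_def flip: two_exp_mult_cos)
  also have "\<dots> = eci_kernel lam w * (1 - eci_ratio w ^ N)"
    by (simp flip: one_diff_power_eq)
  ultimately show ?thesis
    by simp
qed

lemma Eci_eq_eci_partial_sum_remainder: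
  assumes "0 \<le> x" "x < pi / 2" and "\<And>k. k < N \<Longrightarrow> 2 * real k + 1 + lam \<noteq> 0"
  shows "Eci x lam = eci_partial_sum lam N (of_real x) - eci_partial_sum lam N 0
           + integral {0..x} (\<lambda>t. eci_kernel lam (of_real t) * eci_ratio (of_real t) ^ N)"
proof -
  have cos_nonzero: "cos (complex_of_real t) \<noteq> 0" if "t \<in> {0..x}" for t
    using that assms(2) cos_of_real_nonzero by auto
  have "((\<lambda>t. eci_kernel lam (of_real t) * (1 - eci_ratio (of_real t) ^ N)) has_integral
      eci_partial_sum lam N (of_real x) - eci_partial_sum lam N (of_real 0)) {0..x}"
    using assms cos_nonzero
    by (intro fundamental_theorem_of_calculus)
      (auto intro!: has_vector_derivative_real_field has_field_derivative_eci_partial_sum)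
  moreover have "(\<lambda>t. eci_kernel lam (of_real t) * eci_ratio (of_real t) ^ N) integrable_on {0..x}"
    using cos_nonzero unfolding eci_kernel_def eci_ratio_def
    by (intro integrable_continuous_interval continuous_intros) auto
  ultimately have "((\<lambda>t. eci_kernel lam (of_real t)) has_integral
      eci_partial_sum lam N (of_real x) - eci_partial_sum lam N 0
      + integral {0..x} (\<lambda>t. eci_kernel lam (of_real t) * eci_ratio (of_real t) ^ N)) {0..x}"
    by (auto dest: has_integral_add simp: algebra_simps)
  then show ?thesis
    by (simp add: Eci_eq_integral_eci_kernel integral_unique)
qed

lemma eci_remainder_tendsto_0:
  assumes "0 \<le> x" "x < pi / 2"
  shows "(\<lambda>N. integral {0..x} (\<lambda>t. eci_kernel lam (of_real t) * eci_ratio (of_real t) ^ N)) \<longlonglongrightarrow> 0"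
proof (rule Lim_null_comparison[OF always_eventually])
  define R where "R \<omega> = integral {0..x} (\<lambda>t. eci_kernel lam (of_real t) * exp (\<i> * of_real (\<omega> * t)))" for \<omega>
  have cos_nonzero: "cos (complex_of_real t) \<noteq> 0" if "t \<in> {0..x}" for t
    using that assms(2) cos_of_real_nonzero by auto
  have "(R \<longlongrightarrow> 0) at_top"
    unfolding R_def
  proof (rule Riemann_Lebesgue_C1)
    let ?f' = "\<lambda>w. exp (\<i> * of_real lam * w) * (\<i> * of_real lam * cos w + sin w) / (cos w)\<^sup>2"
    show "((\<lambda>t. eci_kernel lam (of_real t)) has_vector_derivative ?f' (of_real t)) (at t within {0..x})"
      if "t \<in> {0..x}" for t
      using cos_nonzero[OF that] by (intro has_vector_derivative_real_field has_field_derivative_eci_kernel)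
    show "continuous_on {0..x} (\<lambda>t. ?f' (of_real t))"
      using cos_nonzero by (auto intro!: continuous_intros)
  qed (use assms in auto)
  moreover have "filterlim (\<lambda>N. 2 * real N) at_top sequentially"
    by (intro filterlim_tendsto_pos_mult_at_top[OF tendsto_const] filterlim_real_sequentially) simp
  ultimately have "(\<lambda>N. R (2 * real N)) \<longlonglongrightarrow> 0"
    by (rule filterlim_compose)
  then show "(\<lambda>N. norm (R (2 * real N))) \<longlonglongrightarrow> 0"
    by (rule tendsto_norm_zero)
  have ratio_power: "eci_ratio (of_real t) ^ N = (-1) ^ N * exp (\<i> * of_real (2 * real N * t))" for t N
  proof -
    have "exp (\<i> * of_real (2 * real N * t)) = exp (2 * \<i> * of_real t) ^ N"
      by (simp add: mult_ac flip: exp_of_nat_mult)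
    then show ?thesis
      unfolding eci_ratio_def by (simp add: power_minus[of "exp _"])
  qed
  have "integral {0..x} (\<lambda>t. eci_kernel lam (of_real t) * eci_ratio (of_real t) ^ N) = (-1) ^ N * R (2 * real N)" for N
    unfolding R_def ratio_power by (subst mult.left_commute) (rule integral_mult_right)
  then show "\<forall>N. norm (integral {0..x} (\<lambda>t. eci_kernel lam (of_real t) * eci_ratio (of_real t) ^ N))
      \<le> norm (R (2 * real N))"
    by (simp add: norm_mult norm_power)
qed

lemma eci_partial_sum_0:
  "eci_partial_sum lam N 0 = - \<i> * of_real (2 * (\<Sum>k<N. (-1) ^ k / (2 * real k + 1 + lam)))"
proof -
  have "exp (\<i> * (of_real (2 * real k + 1) * (0 - of_real pi / 2))) = - \<i> * (-1) ^ k" for k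
    using exp_odd_multiple_shifted[of k 0] by (simp add: eci_ratio_def)
  then show ?thesis
    unfolding eci_partial_sum_def by (simp add: sum_distrib_left mult_ac)
qed

lemma eci_partial_sum_of_real:
  "eci_partial_sum lam N (of_real x) = exp (\<i> * of_real (x * lam)) *
     (2 * (\<Sum>k<N. exp (\<i> * of_real ((2 * real k + 1) * (x - pi / 2))) / of_real (2 * real k + 1 + lam)))"
proof -
  have "exp (\<i> * (of_real lam * of_real x + of_real (2 * real k + 1) * (of_real x - of_real pi / 2)))
      = exp (\<i> * of_real (x * lam)) * exp (\<i> * of_real ((2 * real k + 1) * (x - pi / 2)))" for k
    by (simp add: mult_ac flip: exp_add distrib_left)
  then show ?thesis
    unfolding eci_partial_sum_def by (simp add: sum_distrib_left mult_ac)
qed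

lemma summable_alternating_odd_reciprocals:
  "summable (\<lambda>k. (-1) ^ k / (2 * real k + 1 + lam))"
proof -
  define m where "m = nat \<lceil>\<bar>lam\<bar>\<rceil>"
  define b where "b k = 1 / (2 * real (k + m) + 1 + lam)" for k
  have "real m \<ge> \<bar>lam\<bar>"
    unfolding m_def by linarith
  then have pos: "2 * real (k + m) + 1 + lam \<ge> 1" for k
    by simp
  have "summable (\<lambda>k. (-1) ^ k * b k)"
  proof (rule summable_Leibniz'(1))
    show "b \<longlonglongrightarrow> 0"
      unfolding b_def by real_asymp
    show "0 \<le> b k" for k
      using pos[of k] unfolding b_def by simp
    show "b (Suc k) \<le> b k" for k
      using pos[of k] unfolding b_def by (intro divide_left_mono) auto
  qed
  then have "summable (\<lambda>k. (-1) ^ m * ((-1) ^ k * b k))"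
    by (rule summable_mult)
  then have "summable (\<lambda>k. (-1) ^ (k + m) / (2 * real (k + m) + 1 + lam))"
    by (simp add: b_def power_add mult_ac)
  then show ?thesis
    by (rule summable_iff_shift[THEN iffD1])
qed

lemma Eci_eq_Lser_Spi2:
  assumes "0 \<le> x" "x < pi / 2" and "\<forall>k. 2 * real k + 1 + lam \<noteq> 0"
  shows "Eci x lam = exp (\<i> * complex_of_real (x * lam)) * Lser (x - pi / 2) lam + \<i> * Spi2 lam"
proof -
  define X where "X = exp (\<i> * complex_of_real (x * lam))"
  define u where "u k = exp (\<i> * of_real ((2 * real k + 1) * (x - pi / 2))) / of_real (2 * real k + 1 + lam)" for k
  have "(\<lambda>N. eci_partial_sum lam N 0) \<longlonglongrightarrow> - \<i> * Spi2 lam"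
    unfolding eci_partial_sum_0 Spi2_def
    by (intro tendsto_intros summable_LIMSEQ summable_alternating_odd_reciprocals)
  then have "(\<lambda>N. Eci x lam + eci_partial_sum lam N 0
      - integral {0..x} (\<lambda>t. eci_kernel lam (of_real t) * eci_ratio (of_real t) ^ N))
      \<longlonglongrightarrow> Eci x lam + - \<i> * Spi2 lam - 0"
    by (intro tendsto_diff tendsto_add tendsto_const eci_remainder_tendsto_0 assms(1,2))
  moreover have "Eci x lam + eci_partial_sum lam N 0
      - integral {0..x} (\<lambda>t. eci_kernel lam (of_real t) * eci_ratio (of_real t) ^ N)
      = X * (2 * (\<Sum>k<N. u k))" for N
    using Eci_eq_eci_partial_sum_remainder[of x N lam] assms
    by (simp add: eci_partial_sum_of_real X_def u_def)
  ultimately have "(\<lambda>N. X * (2 * (\<Sum>k<N. u k))) \<longlonglongrightarrow> Eci x lam - \<i> * Spi2 lam"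
    by simp
  then have "(\<lambda>N. (\<Sum>k<N. u k)) \<longlonglongrightarrow> (Eci x lam - \<i> * Spi2 lam) / (2 * X)"
    by (auto dest: tendsto_divide[OF _ tendsto_const, of _ _ _ "2 * X"] simp: X_def)
  then have "Lser (x - pi / 2) lam = 2 * ((Eci x lam - \<i> * Spi2 lam) / (2 * X))"
    unfolding Lser_def u_def[symmetric] by (simp add: sums_def sums_unique[symmetric])
  then have "X * Lser (x - pi / 2) lam = Eci x lam - \<i> * Spi2 lam"
    by (simp add: X_def)
  then show ?thesis
    unfolding X_def by (simp add: algebra_simps)
qed

section \<open>The Laplace transform representation\<close>

lemma norm_cosh_ge: "cos (Im w) * exp (Re w) / 2 \<le> norm (cosh w)"
proof (cases "cos (Im w) \<ge> 0")
  case True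
  have "cos (Im w) * exp (Re w) / 2 \<le> cos (Im w) * (exp (Re w) + exp (- Re w)) / 2"
    using True by (intro divide_right_mono mult_left_mono) auto
  also have "\<dots> = Re (cosh w)"
    by (simp add: cosh_field_def Re_exp algebra_simps)
  also have "\<dots> \<le> norm (cosh w)"
    by (rule complex_Re_le_cmod)
  finally show ?thesis .
next
  case False
  then have "cos (Im w) * exp (Re w) / 2 < 0"
    by (simp add: mult_neg_pos)
  then show ?thesis
    by (meson norm_ge_zero order.trans less_imp_le)
qed

definition laplace_sech :: "real \<Rightarrow> complex \<Rightarrow> complex" where
  "laplace_sech lam w = exp (- of_real lam * w) / cosh w"

lemma norm_laplace_sech_le:
  assumes "cos (Im w) > 0"
  shows "norm (laplace_sech lam w) \<le> 2 * exp (- (lam + 1) * Re w) / cos (Im w)"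
proof -
  have "0 < cos (Im w) * exp (Re w) / 2"
    using assms by simp
  then have "0 < norm (cosh w)"
    using norm_cosh_ge[of w] by linarith
  have "norm (laplace_sech lam w) = exp (- lam * Re w) / norm (cosh w)"
    unfolding laplace_sech_def norm_divide by (simp add: norm_exp_eq_Re)
  also have "\<dots> \<le> exp (- lam * Re w) / (cos (Im w) * exp (Re w) / 2)"
    using \<open>0 < cos (Im w) * exp (Re w) / 2\<close> \<open>0 < norm (cosh w)\<close> norm_cosh_ge[of w]
    by (intro divide_left_mono) auto
  also have "\<dots> = 2 * exp (- (lam + 1) * Re w) / cos (Im w)"
  proof -
    have "exp (- (lam + 1) * Re w) = exp (- lam * Re w) / exp (Re w)"
      by (simp add: algebra_simps flip: exp_diff)
    then show ?thesis
      by (simp add: mult_ac)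
  qed
  finally show ?thesis .
qed

lemma cosh_nonzero_strip:
  assumes "\<bar>Im w\<bar> < pi / 2"
  shows "cosh w \<noteq> 0"
proof -
  have "0 < cos (Im w) * exp (Re w) / 2"
    using assms cos_gt_zero_pi[of "Im w"] by (simp add: abs_less_iff)
  then show ?thesis
    using norm_cosh_ge[of w] by auto
qed

lemma laplace_sech_primitive:
  obtains H where "\<And>w. \<bar>Im w\<bar> < pi / 2 \<Longrightarrow> (H has_field_derivative laplace_sech lam w) (at w)"
proof -
  define S where "S = {w. Im w < pi / 2} \<inter> {w. Im w > - (pi / 2)}"
  have "open S"
    unfolding S_def by (intro open_Int open_halfspace_Im_lt open_halfspace_Im_gt)
  have "convex S"
    unfolding S_def by (intro convex_Int convex_halfspace_Im_lt convex_halfspace_Im_gt)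
  have "laplace_sech lam analytic_on S"
    unfolding laplace_sech_def S_def using cosh_nonzero_strip
    by (auto intro!: analytic_intros simp: abs_less_iff)
  then obtain H where H: "\<And>w. w \<in> S \<Longrightarrow> (H has_field_derivative laplace_sech lam w) (at w within S)"
    using holomorphic_convex_primitive'[OF \<open>convex S\<close> \<open>open S\<close>] analytic_imp_holomorphic by blast
  show ?thesis
  proof (rule that)
    fix w :: complex
    assume "\<bar>Im w\<bar> < pi / 2"
    then have "w \<in> S"
      by (auto simp: S_def abs_less_iff)
    with H[OF this] show "(H has_field_derivative laplace_sech lam w) (at w)"
      using at_within_open[OF _ \<open>open S\<close>] by metis
  qed
qed

lemma has_integral_primitive_along_line:
  fixes H h :: "complex \<Rightarrow> complex"
  assumes "a \<le> b"
    and "\<And>t. t \<in> {a..b} \<Longrightarrow> (H has_field_derivative h (p + of_real t * d)) (at (p + of_real t * d))"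
  shows "((\<lambda>t. d * h (p + of_real t * d)) has_integral H (p + of_real b * d) - H (p + of_real a * d)) {a..b}"
proof (rule fundamental_theorem_of_calculus[OF \<open>a \<le> b\<close>])
  fix t assume "t \<in> {a..b}"
  have "((\<lambda>z. p + z * d) has_field_derivative d) (at (of_real t))"
    by (auto intro!: derivative_eq_intros)
  from DERIV_chain2[OF assms(2)[OF \<open>t \<in> {a..b}\<close>] this]
  have "((\<lambda>z. H (p + z * d)) has_field_derivative d * h (p + of_real t * d)) (at (of_real t))"
    by (simp add: mult.commute)
  then show "((\<lambda>t. H (p + of_real t * d)) has_vector_derivative d * h (p + of_real t * d)) (at t within {a..b})"
    by (rule has_vector_derivative_real_field)
qed

lemma Eci_eq_primitive_diff:
  assumes H: "\<And>w. \<bar>Im w\<bar> < pi / 2 \<Longrightarrow> (H has_field_derivative laplace_sech lam w) (at w)"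
    and "0 \<le> y" "y < pi / 2"
  shows "Eci y lam = \<i> * (H (- \<i> * of_real y) - H 0)"
proof -
  have "((\<lambda>t. - \<i> * laplace_sech lam (0 + of_real t * - \<i>)) has_integral
      H (0 + of_real y * - \<i>) - H (0 + of_real 0 * - \<i>)) {0..y}"
    using assms by (intro has_integral_primitive_along_line H) auto
  then have "((\<lambda>t. \<i> * (- \<i> * laplace_sech lam (0 + of_real t * - \<i>))) has_integral
      \<i> * (H (0 + of_real y * - \<i>) - H (0 + of_real 0 * - \<i>))) {0..y}"
    by (rule has_integral_mult_right)
  then have "((\<lambda>t. laplace_sech lam (- \<i> * of_real t)) has_integral \<i> * (H (- \<i> * of_real y) - H 0)) {0..y}"
    by (simp add: mult.commute)
  moreover have "laplace_sech lam (- \<i> * of_real t) = exp (\<i> * of_real (t * lam)) / of_real (cos t)" for t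
    by (simp add: laplace_sech_def cosh_conv_cos cos_of_real mult_ac)
  ultimately show ?thesis
    unfolding Eci_def by (simp add: integral_unique)
qed

lemma norm_primitive_vertical_le:
  assumes H: "\<And>w. \<bar>Im w\<bar> < pi / 2 \<Longrightarrow> (H has_field_derivative laplace_sech lam w) (at w)"
    and "0 \<le> y" "y < pi / 2"
  shows "norm (H (of_real R) - H (of_real R - \<i> * of_real y)) \<le> 2 * exp (- (lam + 1) * R) / cos y * y"
proof -
  have cos_y: "0 < cos y"
    using assms cos_gt_zero_pi[of y] by simp
  have integral: "((\<lambda>t. - \<i> * laplace_sech lam (of_real R + of_real t * - \<i>)) has_integral
      H (of_real R + of_real y * - \<i>) - H (of_real R + of_real 0 * - \<i>)) {0..y}"
    using assms by (intro has_integral_primitive_along_line H) auto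
  have bound: "norm (- \<i> * laplace_sech lam (of_real R + of_real t * - \<i>)) \<le> 2 * exp (- (lam + 1) * R) / cos y"
    if "t \<in> {0..y} - {}" for t
  proof -
    have "cos y \<le> cos t"
      using that assms by (intro cos_monotone_0_pi_le) auto
    moreover have "norm (laplace_sech lam (of_real R + of_real t * - \<i>)) \<le> 2 * exp (- (lam + 1) * R) / cos t"
      using norm_laplace_sech_le[of "of_real R + of_real t * - \<i>" lam] cos_y \<open>cos y \<le> cos t\<close> by simp
    moreover have "2 * exp (- (lam + 1) * R) / cos t \<le> 2 * exp (- (lam + 1) * R) / cos y"
      using cos_y \<open>cos y \<le> cos t\<close> by (intro divide_left_mono) auto
    ultimately show ?thesis
      by (simp add: norm_mult)
  qed
  from has_integral_bound_real[OF _ finite.emptyI integral bound] cos_y assms(2)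
  have "norm (H (of_real R + of_real y * - \<i>) - H (of_real R + of_real 0 * - \<i>))
      \<le> 2 * exp (- (lam + 1) * R) / cos y * y"
    by simp
  then show ?thesis
    by (simp add: norm_minus_commute mult.commute)
qed

lemma laplace_sech_rectangle:
  assumes H: "\<And>w. \<bar>Im w\<bar> < pi / 2 \<Longrightarrow> (H has_field_derivative laplace_sech lam w) (at w)"
    and "0 \<le> y" "y < pi / 2" "0 \<le> R"
  shows "((\<lambda>u. laplace_sech lam (of_real u) - laplace_sech lam (of_real u - \<i> * of_real y)) has_integral
           - \<i> * Eci y lam + (H (of_real R) - H (of_real R - \<i> * of_real y))) {0..R}"
proof -
  have horizontal: "((\<lambda>u. laplace_sech lam (of_real u - \<i> * of_real c)) has_integral
      H (of_real R - \<i> * of_real c) - H (- \<i> * of_real c)) {0..R}" if "0 \<le> c" "c < pi / 2" for c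
  proof -
    have "((\<lambda>t. 1 * laplace_sech lam (- \<i> * of_real c + of_real t * 1)) has_integral
        H (- \<i> * of_real c + of_real R * 1) - H (- \<i> * of_real c + of_real 0 * 1)) {0..R}"
      using assms that by (intro has_integral_primitive_along_line H) auto
    then show ?thesis
      by (simp add: algebra_simps)
  qed
  have "((\<lambda>u. laplace_sech lam (of_real u) - laplace_sech lam (of_real u - \<i> * of_real y)) has_integral
      (H (of_real R) - H 0) - (H (of_real R - \<i> * of_real y) - H (- \<i> * of_real y))) {0..R}"
    using has_integral_diff[OF horizontal[of 0] horizontal[of y]] assms by simp
  also have "(H (of_real R) - H 0) - (H (of_real R - \<i> * of_real y) - H (- \<i> * of_real y))
      = (H (- \<i> * of_real y) - H 0) + (H (of_real R) - H (of_real R - \<i> * of_real y))"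
    by (simp add: algebra_simps)
  also have "H (- \<i> * of_real y) - H 0 = - \<i> * Eci y lam"
    using Eci_eq_primitive_diff[OF H \<open>0 \<le> y\<close> \<open>y < pi / 2\<close>] by simp
  finally show ?thesis .
qed

lemma has_integral_atLeast_by_truncation:
  fixes F :: "real \<Rightarrow> 'a::euclidean_space"
  assumes trunc: "\<And>R. a \<le> R \<Longrightarrow> (F has_integral I R) {a..R}"
    and lim: "(I \<longlongrightarrow> L) at_top"
    and g: "g integrable_on {a..}"
    and dom: "\<And>u. a \<le> u \<Longrightarrow> norm (F u) \<le> g u"
  shows "(F has_integral L) {a..}"
proof -
  define f where "f n u = (if u \<in> {..a + real n} then F u else 0)" for n :: nat and u
  have "(f n has_integral I (a + real n)) {a..}" for n
  proof -
    have "{..a + real n} \<inter> {a..} = {a..a + real n}"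
      by auto
    then show ?thesis
      unfolding f_def has_integral_restrict_Int using trunc[of "a + real n"] by simp
  qed
  moreover have "\<forall>u\<in>{a..}. norm (f n u) \<le> g u" for n
    using dom order_trans[OF norm_ge_zero dom] unfolding f_def by simp
  moreover have "\<forall>u\<in>{a..}. (\<lambda>n. f n u) \<longlonglongrightarrow> F u"
  proof
    fix u :: real
    have "\<forall>\<^sub>F n in sequentially. u - a \<le> real n"
      using filterlim_real_sequentially by (simp add: filterlim_at_top)
    then have "\<forall>\<^sub>F n in sequentially. f n u = F u"
      by eventually_elim (simp add: f_def)
    then show "(\<lambda>n. f n u) \<longlonglongrightarrow> F u"
      by (rule tendsto_eventually)
  qed
  moreover have "filterlim (\<lambda>n. a + real n) at_top sequentially"
    by (intro filterlim_tendsto_add_at_top[OF tendsto_const] filterlim_real_sequentially)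
  then have "(\<lambda>n. I (a + real n)) \<longlonglongrightarrow> L"
    by (rule filterlim_compose[OF lim])
  ultimately show ?thesis
    by (rule has_integral_dominated_convergence[OF _ g])
qed

lemma cosh_of_real: "cosh (of_real x :: 'a::{banach, real_normed_field}) = of_real (cosh x)"
  by (simp add: cosh_field_def exp_of_real flip: of_real_minus)

lemma laplace_sech_integrand:
  "complex_of_real (exp (- lam * u)) *
     (1 / complex_of_real (cosh u) - exp (\<i> * complex_of_real (lam * y)) / cosh (complex_of_real u - \<i> * complex_of_real y))
   = laplace_sech lam (of_real u) - laplace_sech lam (of_real u - \<i> * of_real y)"
proof -
  have "exp (- of_real lam * (of_real u - \<i> * of_real y)) = of_real (exp (- lam * u)) * exp (\<i> * of_real (lam * y))"
    by (simp add: algebra_simps flip: exp_add exp_of_real)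
  then show ?thesis
    by (simp add: laplace_sech_def cosh_of_real algebra_simps flip: exp_of_real)
qed

lemma norm_laplace_sech_strip_diff_le:
  assumes "0 \<le> y" "y < pi / 2"
  shows "norm (laplace_sech lam (of_real u) - laplace_sech lam (of_real u - \<i> * of_real y))
           \<le> 4 / cos y * exp (- (lam + 1) * u)"
proof -
  let ?B = "2 * exp (- (lam + 1) * u) / cos y"
  have cos_y: "0 < cos y" "cos y \<le> 1"
    using assms cos_gt_zero_pi[of y] by auto
  have "norm (laplace_sech lam (of_real u)) \<le> 2 * exp (- (lam + 1) * u) / 1"
    using norm_laplace_sech_le[of "of_real u" lam] by simp
  also have "\<dots> \<le> ?B"
    using cos_y by (intro divide_left_mono) auto
  finally have "norm (laplace_sech lam (of_real u)) \<le> ?B" .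
  moreover have "norm (laplace_sech lam (of_real u - \<i> * of_real y)) \<le> ?B"
    using norm_laplace_sech_le[of "of_real u - \<i> * of_real y" lam] cos_y by simp
  ultimately have "norm (laplace_sech lam (of_real u) - laplace_sech lam (of_real u - \<i> * of_real y))
      \<le> ?B + ?B"
    by (meson add_mono norm_triangle_ineq4 order_trans)
  then show ?thesis
    by simp
qed

lemma primitive_vertical_tendsto_0:
  assumes H: "\<And>w. \<bar>Im w\<bar> < pi / 2 \<Longrightarrow> (H has_field_derivative laplace_sech lam w) (at w)"
    and "0 \<le> y" "y < pi / 2" "lam > -1"
  shows "((\<lambda>R. H (of_real R) - H (of_real R - \<i> * of_real y)) \<longlongrightarrow> 0) at_top"
proof (rule Lim_null_comparison[OF always_eventually])
  show "\<forall>R. norm (H (of_real R) - H (of_real R - \<i> * of_real y)) \<le> 2 * exp (- (lam + 1) * R) / cos y * y"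
    using norm_primitive_vertical_le[OF H assms(2,3)] by blast
  have "((\<lambda>R. exp (- c * R)) \<longlongrightarrow> 0) at_top" if "c > 0" for c :: real
    using that by real_asymp
  from this[of "lam + 1"] have "((\<lambda>R. 2 * exp (- (lam + 1) * R) / cos y * y) \<longlongrightarrow> 2 * 0 / cos y * y) at_top"
    using assms cos_gt_zero_pi[of y] by (intro tendsto_intros) auto
  then show "((\<lambda>R. 2 * exp (- (lam + 1) * R) / cos y * y) \<longlongrightarrow> 0) at_top"
    by simp
qed

lemma Eci_eq_laplace_integral:
  assumes "0 \<le> y" "y < pi / 2" "lam > -1"
  shows "Eci y lam = \<i> * integral {0..} (\<lambda>u. complex_of_real (exp (- lam * u)) *
           (1 / complex_of_real (cosh u)
            - exp (\<i> * complex_of_real (lam * y)) / cosh (complex_of_real u - \<i> * complex_of_real y)))"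
proof -
  obtain H where H: "\<And>w. \<bar>Im w\<bar> < pi / 2 \<Longrightarrow> (H has_field_derivative laplace_sech lam w) (at w)"
    using laplace_sech_primitive by blast
  have "((\<lambda>u. laplace_sech lam (of_real u) - laplace_sech lam (of_real u - \<i> * of_real y))
      has_integral - \<i> * Eci y lam) {0..}"
  proof (rule has_integral_atLeast_by_truncation)
    show "((\<lambda>u. laplace_sech lam (of_real u) - laplace_sech lam (of_real u - \<i> * of_real y)) has_integral
        - \<i> * Eci y lam + (H (of_real R) - H (of_real R - \<i> * of_real y))) {0..R}" if "0 \<le> R" for R
      using assms that by (intro laplace_sech_rectangle H)
    show "((\<lambda>R. - \<i> * Eci y lam + (H (of_real R) - H (of_real R - \<i> * of_real y)))
        \<longlongrightarrow> - \<i> * Eci y lam) at_top"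
      using tendsto_add[OF tendsto_const primitive_vertical_tendsto_0[OF H assms], of "- \<i> * Eci y lam"]
      by simp
    show "(\<lambda>u. 4 / cos y * exp (- (lam + 1) * u)) integrable_on {0..}"
      using integrable_on_cmult_left[OF integrable_on_exp_minus_to_infinity[of "lam + 1" 0], of "4 / cos y"]
        assms(3) by simp
    show "norm (laplace_sech lam (of_real u) - laplace_sech lam (of_real u - \<i> * of_real y))
        \<le> 4 / cos y * exp (- (lam + 1) * u)" for u
      using assms(1,2) by (rule norm_laplace_sech_strip_diff_le)
  qed
  then show ?thesis
    unfolding laplace_sech_integrand by (simp add: integral_unique)
qed

theorem proposition8:
  fixes x y lam :: real
  assumes "0 < x" "x < pi / 2" "0 < y" "y < pi / 2"
  shows "((\<forall>k::nat. 2 * real k + 1 + lam \<noteq> 0) \<longrightarrow>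
           Eci x lam = exp (\<i> * complex_of_real (x * lam)) * Lser (x - pi / 2) lam + \<i> * Spi2 lam) \<and>
         (lam > -1 \<longrightarrow>
           Eci y lam = \<i> * integral {0..} (\<lambda>u. complex_of_real (exp (- lam * u)) *
              (1 / complex_of_real (cosh u)
               - exp (\<i> * complex_of_real (lam * y)) / cosh (complex_of_real u - \<i> * complex_of_real y))))"
  using Eci_eq_Lser_Spi2[of x lam] Eci_eq_laplace_integral[of y lam] assms by auto

end
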